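(* Let $I=[x_1,x_N]$ with partition $x_1<\dots<x_N$, affine maps $u_i(x)=a_ix+b_i$ with $u_i(x_1)=x_i$, $u_i(x_N)=x_{i+1}$ ($i\in\mathbb{N}_{N-1}$), scaling functions $\alpha_i\in C(I)$ with $\|\alpha\|_\infty:=\max_i\|\alpha_i\|_\infty<1$, and $q\in(0,1]$. Equip $C(I)$ with the sup-norm. Then for every $n\in\mathbb{N}$ the operator $\mathcal{F}^{(q,\alpha)}_n:C(I)\to C(I)$, $\mathcal{F}^{(q,\alpha)}_n(f)=f^{(q,\alpha)}_n$, is linear and bounded.
   Context: For $q\in(0,1]$: $[k]_q=\frac{1-q^k}{1-q}$ ($q\neq1$), $[k]_1=k$, $[k]_q!=[k]_q\cdots[1]_q$, $[0]_q!=1$, $\binom{n}{k}_q=\frac{[n]_q!}{[k]_q![n-k]_q!}$. Quantum MKZ operator: $M_{n,q}f(x)=P_{n,q}(x)\sum_{k\ge0}\binom{n+k}{k}_q\left(\frac{x-x_1}{x_N-x_1}\right)^k f\!\left(x_1+(x_N-x_1)\frac{[k]_q}{[k+n]_q}\right)$ for $x_1\le x<x_N$, $M_{n,q}f(x_N)=f(x_N)$, with $P_{n,q}(x)=\prod_{j=0}^n(x_N-x_1-q^j(x-x_1))/(x_N-x_1)^{n+1}$. The quantum MKZ-fractal function $f^{(q,\alpha)}_n$ of $f\in C(I)$ is the unique $g\in C(I)$ with $g(u_i(x))=f(u_i(x))+\alpha_i(x)(g(x)-M_{n,q}f(x))$ for all $x\in I$, $i\in\mathbb{N}_{N-1}$.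 *)

theory Defs
  imports "HOL-Analysis.Analysis"
begin

definition qint :: "real \<Rightarrow> nat \<Rightarrow> real" where
  "qint q k = (if q = 1 then real k else (1 - q ^ k) / (1 - q))"

definition qfact :: "real \<Rightarrow> nat \<Rightarrow> real" where
  "qfact q k = (\<Prod>j\<in>{1..k}. qint q j)"

definition qbinom :: "real \<Rightarrow> nat \<Rightarrow> nat \<Rightarrow> real" where
  "qbinom q m k = qfact q m / (qfact q k * qfact q (m - k))"

definition qMKZ_P :: "real \<Rightarrow> real \<Rightarrow> real \<Rightarrow> nat \<Rightarrow> real \<Rightarrow> real" where
  "qMKZ_P x1 xN q n x =
     (\<Prod>j\<in>{0..n}. (xN - x1 - q ^ j * (x - x1))) / (xN - x1) ^ (n + 1)"

definition qMKZ :: "real \<Rightarrow> real \<Rightarrow> real \<Rightarrow> nat \<Rightarrow> (real \<Rightarrow> real) \<Rightarrow> real \<Rightarrow> real" where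
  "qMKZ x1 xN q n f x =
     (if x = xN then f xN
      else qMKZ_P x1 xN q n x *
        (\<Sum>k. qbinom q (n + k) k * ((x - x1) / (xN - x1)) ^ k *
               f (x1 + (xN - x1) * (qint q k / qint q (k + n)))))"

definition is_qMKZ_fractal ::
  "(nat \<Rightarrow> real) \<Rightarrow> nat \<Rightarrow> (nat \<Rightarrow> real \<Rightarrow> real) \<Rightarrow> (nat \<Rightarrow> real \<Rightarrow> real) \<Rightarrow> real \<Rightarrow> nat
     \<Rightarrow> (real \<Rightarrow> real) \<Rightarrow> (real \<Rightarrow> real) \<Rightarrow> bool" where
  "is_qMKZ_fractal xs N u \<alpha> q n f g \<longleftrightarrow>
     continuous_on {xs 1..xs N} g \<and> (\<forall>y. y \<notin> {xs 1..xs N} \<longrightarrow> g y = 0) \<and>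
     (\<forall>i\<in>{1..N-1}. \<forall>y\<in>{xs 1..xs N}.
        g (u i y) = f (u i y) + \<alpha> i y * (g y - qMKZ (xs 1) (xs N) q n f y))"

definition qMKZ_fractal ::
  "(nat \<Rightarrow> real) \<Rightarrow> nat \<Rightarrow> (nat \<Rightarrow> real \<Rightarrow> real) \<Rightarrow> (nat \<Rightarrow> real \<Rightarrow> real) \<Rightarrow> real \<Rightarrow> nat
     \<Rightarrow> (real \<Rightarrow> real) \<Rightarrow> (real \<Rightarrow> real)" where
  "qMKZ_fractal xs N u \<alpha> q n f = (THE g. is_qMKZ_fractal xs N u \<alpha> q n f g)"

end

theory Submission
  imports Defs "HOL-Real_Asymp.Real_Asymp"
begin

(* For 0 <= t < 1 the q-binomial series gives
     sum_k [n+k choose k]_q t^k = 1 / prod_{j=0..n} (1 - q^j t),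
   so for x < x_N the value M_{n,q} f x is an average of the values of f at the nodes
   x_1 + (x_N - x_1) [k]_q / [k+n]_q, with nonnegative weights summing to 1.  Hence M_{n,q} is
   linear, bounded by the sup-norm, interpolates f at both end points, and maps C(I) into C(I)
   (at x_N the nodes accumulate and the weight of every finite set of nodes tends to 0).
   The fractal function of f is the fixed point of the Read-Bajraktarevic operator, a contraction
   with constant ||alpha|| < 1 on the closed set of bounded continuous functions agreeing with f at
   x_1 and x_N.  Linear combinations of fractal functions are fractal functions of the linear
   combinations, so uniqueness gives linearity, and the functional equation gives the bound
   ||f^alpha|| <= (1 + ||alpha||) / (1 - ||alpha||) ||f||. *)

section \<open>q-integers and the q-binomial series\<close>

lemma qint_0 [simp]: "qint q 0 = 0"
  by (simp add: qint_def)

lemma qint_Suc: "qint q (Suc k) = 1 + q * qint q k"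
  by (cases "q = 1") (auto simp: qint_def field_simps)

lemma qint_add: "qint q (j + k) = qint q j + q ^ j * qint q k"
  by (induction j) (auto simp: qint_Suc algebra_simps)

lemma qint_ge_1: "0 < q \<Longrightarrow> 1 \<le> k \<Longrightarrow> 1 \<le> qint q k"
proof (induction k)
  case (Suc k)
  have "0 \<le> qint q k" using Suc by (cases k) auto
  then show ?case using Suc.prems by (simp add: qint_Suc)
qed simp

lemma qint_nonneg: "0 < q \<Longrightarrow> 0 \<le> qint q k"
  using qint_ge_1[of q k] by (cases k) auto

lemma qint_mono_add: "0 < q \<Longrightarrow> qint q j \<le> qint q (j + k)"
  using qint_nonneg[of q k] by (simp add: qint_add)

lemma qfact_0 [simp]: "qfact q 0 = 1"
  by (simp add: qfact_def)

lemma qfact_Suc: "qfact q (Suc k) = qfact q k * qint q (Suc k)"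
  by (simp add: qfact_def prod.nat_ivl_Suc')

lemma qfact_pos: "0 < q \<Longrightarrow> 0 < qfact q k"
  unfolding qfact_def using qint_ge_1 by (intro prod_pos) fastforce

lemma qbinom_0_right: "0 < q \<Longrightarrow> qbinom q m 0 = 1"
  using qfact_pos[of q m] by (simp add: qbinom_def)

lemma qbinom_nonneg: "0 < q \<Longrightarrow> 0 \<le> qbinom q m k"
  unfolding qbinom_def using qfact_pos[of q] by (simp add: less_imp_le)

lemma qbinom_pascal:
  assumes "0 < q"
  shows "qbinom q (Suc m + Suc k) (Suc k)
       = qbinom q (Suc m + k) k + q ^ Suc k * qbinom q (m + Suc k) (Suc k)"
proof -
  define A where "A = qfact q (m + k + 1)"
  have pos: "0 < A" "0 < qfact q k" "0 < qfact q m" "0 < qint q (Suc k)" "0 < qint q (Suc m)"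
    using qfact_pos qint_ge_1[of q] assms by (auto simp: A_def intro: less_le_trans[OF zero_less_one])
  have "qint q (m + k + 2) = qint q (Suc k) + q ^ Suc k * qint q (Suc m)"
    using qint_add[of q "Suc k" "Suc m"] by (simp add: add.commute)
  then show ?thesis
    using pos by (simp add: qbinom_def qfact_Suc flip: A_def) (simp add: field_simps)
qed

lemma qbinom_Suc_sum:
  "0 < q \<Longrightarrow> qbinom q (Suc m + k) k = (\<Sum>i\<le>k. q ^ i * qbinom q (m + i) i)"
proof (induction k)
  case (Suc k)
  then show ?case using qbinom_pascal[OF Suc.prems, of m k] by simp
qed (simp add: qbinom_0_right)

text \<open>Cauchy product with the geometric series, by induction on \<open>m\<close>: the factor \<open>1 - t\<close> peels
  off and the remaining product is the same identity at \<open>q t\<close>.\<close>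
lemma qbinom_series_sums:
  assumes q: "0 < q" "q \<le> 1" and t: "0 \<le> t" "t < 1"
  shows "(\<lambda>k. qbinom q (m + k) k * t ^ k) sums (1 / (\<Prod>j\<le>m. 1 - q ^ j * t))"
  using t
proof (induction m arbitrary: t)
  case 0
  have "qfact q k \<noteq> 0" for k using qfact_pos[OF q(1), of k] by simp
  then show ?case using geometric_sums[of t] 0 by (simp add: qbinom_def)
next
  case (Suc m)
  have "q * t \<le> t" using mult_right_mono[of q 1 t] Suc.prems q by simp
  then have qt: "0 \<le> q * t" "q * t < 1" using Suc.prems q by auto
  note IH = Suc.IH[OF qt]
  have G: "(\<lambda>k. t ^ k) sums (1 / (1 - t))" using geometric_sums[of t] Suc.prems by simp
  have "(\<lambda>k. \<Sum>i\<le>k. (qbinom q (m + i) i * (q * t) ^ i) * t ^ (k - i)) sums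
        ((\<Sum>k. qbinom q (m + k) k * (q * t) ^ k) * (\<Sum>k. t ^ k))"
    using IH G qbinom_nonneg[OF q(1)] qt Suc.prems
    by (intro Cauchy_product_sums) (auto simp: sums_iff)
  moreover have "(\<Sum>i\<le>k. (qbinom q (m + i) i * (q * t) ^ i) * t ^ (k - i))
      = qbinom q (Suc m + k) k * t ^ k" for k
  proof -
    have "(qbinom q (m + i) i * (q * t) ^ i) * t ^ (k - i) = (q ^ i * qbinom q (m + i) i) * t ^ k"
      if "i \<le> k" for i
    proof -
      have "t ^ i * t ^ (k - i) = t ^ k" using that by (simp flip: power_add)
      then show ?thesis by (simp add: power_mult_distrib algebra_simps)
    qed
    then show ?thesis
      unfolding qbinom_Suc_sum[OF q(1)] sum_distrib_right by (intro sum.cong) auto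
  qed
  moreover have "(\<Prod>j\<le>Suc m. 1 - q ^ j * t) = (1 - t) * (\<Prod>j\<le>m. 1 - q ^ j * (q * t))"
    by (subst prod.atMost_Suc_shift) (simp add: algebra_simps del: prod.atMost_Suc)
  ultimately show ?case using IH G by (simp add: sums_iff)
qed

section \<open>The q-MKZ operator\<close>

lemma weighted_sums_abs_le:
  fixes w c :: "nat \<Rightarrow> real"
  assumes w: "w sums 1" "\<And>k. 0 \<le> w k" and s: "(\<lambda>k. w k * c k) sums s"
    and bound: "\<And>k. \<bar>c k\<bar> \<le> B" and tail: "\<And>k. K \<le> k \<Longrightarrow> \<bar>c k\<bar> \<le> e"
  shows "\<bar>s\<bar> \<le> B * (\<Sum>k<K. w k) + e"
proof -
  have "0 \<le> e" using tail[of K] by linarith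
  define b where "b k = (if k < K then B * w k else 0) + e * w k" for k
  have b_sums: "b sums (B * (\<Sum>k<K. w k) + e)"
  proof -
    have "(\<lambda>k. if k < K then B * w k else 0) sums (\<Sum>k<K. B * w k)"
      using sums_finite[of "{..<K}" "\<lambda>k. if k < K then B * w k else 0"] by simp
    then show ?thesis
      unfolding b_def using sums_add sums_mult[OF w(1), of e] by (fastforce simp: sum_distrib_left)
  qed
  have "\<bar>w k * c k\<bar> \<le> b k" for k
  proof -
    have "\<bar>w k * c k\<bar> = w k * \<bar>c k\<bar>" using w(2) by (simp add: abs_mult)
    also have "\<dots> \<le> w k * (if k < K then B else 0) + w k * e"
      using bound[of k] tail[of k] \<open>0 \<le> e\<close> w(2)[of k]
      by (cases "k < K") (auto intro: mult_left_mono order_trans[OF _ add_increasing2])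
    finally show ?thesis by (cases "k < K") (simp_all add: b_def algebra_simps)
  qed
  then have "s \<le> B * (\<Sum>k<K. w k) + e" "- s \<le> B * (\<Sum>k<K. w k) + e"
    using sums_le[OF _ s b_sums] sums_le[OF _ sums_minus[OF s] b_sums] by (meson abs_le_D1 abs_le_D2)+
  then show ?thesis by linarith
qed

locale qMKZ_interval =
  fixes x1 xN q :: real and n :: nat
  assumes interval: "x1 < xN" and q_pos: "0 < q" and q_le_1: "q \<le> 1"
begin

definition unit_coord :: "real \<Rightarrow> real" where
  "unit_coord x = (x - x1) / (xN - x1)"

definition node :: "nat \<Rightarrow> real" where
  "node k = x1 + (xN - x1) * (qint q k / qint q (k + n))"

definition weight :: "real \<Rightarrow> nat \<Rightarrow> real" where
  "weight x k = qMKZ_P x1 xN q n x * (qbinom q (n + k) k * unit_coord x ^ k)"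

lemma qMKZ_eq:
  "x \<noteq> xN \<Longrightarrow>
    qMKZ x1 xN q n f x = qMKZ_P x1 xN q n x * (\<Sum>k. qbinom q (n + k) k * unit_coord x ^ k * f (node k))"
  by (simp add: qMKZ_def unit_coord_def node_def)

lemma qMKZ_right_end [simp]: "qMKZ x1 xN q n f xN = f xN"
  by (simp add: qMKZ_def)

lemma qMKZ_P_eq_prod: "qMKZ_P x1 xN q n x = (\<Prod>j\<le>n. 1 - q ^ j * unit_coord x)"
proof -
  have "qMKZ_P x1 xN q n x = (\<Prod>j\<le>n. (xN - x1 - q ^ j * (x - x1)) / (xN - x1))"
    by (simp add: qMKZ_P_def prod_dividef atLeast0AtMost)
  also have "\<dots> = (\<Prod>j\<le>n. 1 - q ^ j * unit_coord x)"
    using interval by (intro prod.cong) (auto simp: unit_coord_def field_simps)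
  finally show ?thesis .
qed

lemma unit_coord_range: "x \<in> {x1..<xN} \<Longrightarrow> 0 \<le> unit_coord x \<and> unit_coord x < 1"
  using interval by (simp add: unit_coord_def divide_simps)

lemma qMKZ_P_pos:
  assumes "x \<in> {x1..<xN}"
  shows "0 < qMKZ_P x1 xN q n x"
proof -
  have "q ^ j * unit_coord x < 1" for j
  proof -
    have "q ^ j \<le> 1" using q_pos q_le_1 by (simp add: power_le_one)
    then show ?thesis
      using unit_coord_range[OF assms] mult_right_mono[of "q ^ j" 1 "unit_coord x"] by simp
  qed
  then show ?thesis unfolding qMKZ_P_eq_prod by (intro prod_pos) auto
qed

lemma qMKZ_P_right_end: "qMKZ_P x1 xN q n xN = 0"
  unfolding qMKZ_P_eq_prod using interval by (intro prod_zero bexI[of _ 0]) (auto simp: unit_coord_def)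

lemma weight_nonneg:
  assumes "x \<in> {x1..<xN}"
  shows "0 \<le> weight x k"
  using qMKZ_P_pos[OF assms] unit_coord_range[OF assms] qbinom_nonneg[OF q_pos, of "n + k" k]
  by (simp add: weight_def)

lemma weight_sums:
  assumes "x \<in> {x1..<xN}"
  shows "weight x sums 1"
proof -
  have "(\<lambda>k. qbinom q (n + k) k * unit_coord x ^ k) sums (1 / qMKZ_P x1 xN q n x)"
    using qbinom_series_sums[OF q_pos q_le_1] unit_coord_range[OF assms] by (simp add: qMKZ_P_eq_prod)
  from sums_mult[OF this, of "qMKZ_P x1 xN q n x"] show ?thesis
    using qMKZ_P_pos[OF assms] by (simp add: weight_def[abs_def])
qed

lemma node_mem: "node k \<in> {x1..xN}"
proof -
  have ratio: "0 \<le> qint q k / qint q (k + n)" "qint q k / qint q (k + n) \<le> 1"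
    using qint_nonneg[OF q_pos, of k] qint_mono_add[OF q_pos, of k n] by (auto simp: divide_le_eq_1)
  have "(xN - x1) * (qint q k / qint q (k + n)) \<le> (xN - x1) * 1"
    using ratio interval by (intro mult_left_mono) auto
  moreover have "0 \<le> (xN - x1) * (qint q k / qint q (k + n))"
    using ratio interval by (intro mult_nonneg_nonneg) auto
  ultimately show ?thesis by (simp add: node_def)
qed

lemma node_0: "node 0 = x1"
  by (simp add: node_def)

lemma node_tendsto: "node \<longlonglongrightarrow> xN"
proof -
  have "(\<lambda>k. qint q k / qint q (k + n)) \<longlonglongrightarrow> 1"
  proof (cases "q = 1")
    case True
    have "(\<lambda>k. real k / real (k + n)) \<longlonglongrightarrow> 1" by real_asymp
    then show ?thesis using True by (simp add: qint_def)
  next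
    case False
    then have "\<bar>q\<bar> < 1" using q_pos q_le_1 by simp
    then have "(\<lambda>k. (1 - q ^ k) / (1 - q ^ k * q ^ n)) \<longlonglongrightarrow> (1 - 0) / (1 - 0 * q ^ n)"
      by (intro tendsto_intros LIMSEQ_power_zero) simp_all
    then show ?thesis using False by (simp add: qint_def power_add)
  qed
  then have "node \<longlonglongrightarrow> x1 + (xN - x1) * 1"
    unfolding node_def[abs_def] by (intro tendsto_intros)
  then show ?thesis by simp
qed

lemma qMKZ_sums_if_summable:
  assumes x: "x \<in> {x1..<xN}" and "summable (\<lambda>k. weight x k * f (node k))"
  shows "(\<lambda>k. weight x k * f (node k)) sums qMKZ x1 xN q n f x"
proof -
  let ?P = "qMKZ_P x1 xN q n x"
  have "summable (\<lambda>k. ?P * (qbinom q (n + k) k * unit_coord x ^ k * f (node k)))"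
    using assms(2) by (simp add: weight_def ac_simps)
  then have "summable (\<lambda>k. qbinom q (n + k) k * unit_coord x ^ k * f (node k))"
    using qMKZ_P_pos[OF x] by (simp add: summable_cmult_iff)
  from sums_mult[OF this[unfolded summable_sums_iff], of ?P] show ?thesis
    using x by (simp add: qMKZ_eq weight_def ac_simps)
qed

lemma qMKZ_sums:
  assumes f: "bounded (f ` {x1..xN})" and x: "x \<in> {x1..<xN}"
  shows "(\<lambda>k. weight x k * f (node k)) sums qMKZ x1 xN q n f x"
proof -
  obtain B where B: "\<And>y. y \<in> {x1..xN} \<Longrightarrow> \<bar>f y\<bar> \<le> B"
    using f unfolding bounded_real by (meson imageI)
  have "summable (\<lambda>k. weight x k * f (node k))"
  proof (rule summable_comparison_test)
    show "\<exists>N. \<forall>k\<ge>N. norm (weight x k * f (node k)) \<le> B * weight x k"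
      using B[OF node_mem] weight_nonneg[OF x]
      by (auto simp: abs_mult mult.commute[of B] intro!: exI[of _ 0] mult_left_mono)
    show "summable (\<lambda>k. B * weight x k)"
      using weight_sums[OF x] by (intro summable_mult) (simp add: sums_iff)
  qed
  then show ?thesis by (rule qMKZ_sums_if_summable[OF x])
qed

lemma qMKZ_abs_le:
  assumes B: "\<And>y. y \<in> {x1..xN} \<Longrightarrow> \<bar>f y\<bar> \<le> B" and x: "x \<in> {x1..xN}"
  shows "\<bar>qMKZ x1 xN q n f x\<bar> \<le> B"
proof (cases "x = xN")
  case False
  then have x': "x \<in> {x1..<xN}" using x by simp
  have "bounded (f ` {x1..xN})" using B by (auto simp: bounded_iff intro!: exI[of _ B])
  from weighted_sums_abs_le[OF weight_sums[OF x'] weight_nonneg[OF x'] qMKZ_sums[OF this x'], of B 0 B]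
  show ?thesis using B[OF node_mem] by simp
qed (use B interval in simp)

lemma qMKZ_left_end: "qMKZ x1 xN q n f x1 = f x1"
proof -
  have "unit_coord x1 = 0" "qMKZ_P x1 xN q n x1 = 1"
    by (simp_all add: qMKZ_P_eq_prod unit_coord_def)
  then have "qMKZ x1 xN q n f x1 = (\<Sum>k. (qbinom q (n + k) k * f (node k)) * 0 ^ k)"
    using qMKZ_eq[of x1 f] interval by (simp add: ac_simps)
  then show ?thesis by (simp add: qbinom_0_right[OF q_pos] node_0)
qed

lemma qMKZ_lincomb:
  assumes f: "bounded (f ` {x1..xN})" and g: "bounded (g ` {x1..xN})" and x: "x \<in> {x1..xN}"
  shows "qMKZ x1 xN q n (\<lambda>y. c * f y + d * g y) x = c * qMKZ x1 xN q n f x + d * qMKZ x1 xN q n g x"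
proof (cases "x = xN")
  case False
  then have x': "x \<in> {x1..<xN}" using x by simp
  have "(\<lambda>k. weight x k * (c * f (node k) + d * g (node k)))
      sums (c * qMKZ x1 xN q n f x + d * qMKZ x1 xN q n g x)"
    using sums_add[OF sums_mult[OF qMKZ_sums[OF f x']] sums_mult[OF qMKZ_sums[OF g x']]]
    by (simp add: algebra_simps)
  moreover from this have "(\<lambda>k. weight x k * (c * f (node k) + d * g (node k)))
      sums qMKZ x1 xN q n (\<lambda>y. c * f y + d * g y) x"
    by (intro qMKZ_sums_if_summable[OF x']) (auto simp: sums_iff)
  ultimately show ?thesis by (simp add: sums_unique2)
qed simp

lemma qMKZ_isCont:
  assumes f: "bounded (f ` {x1..xN})" and x: "x \<in> {x1..<xN}"
  shows "isCont (qMKZ x1 xN q n f) x"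
proof -
  define S where "S s = (\<Sum>k. (qbinom q (n + k) k * f (node k)) * s ^ k)" for s
  obtain B where B: "\<And>y. y \<in> {x1..xN} \<Longrightarrow> \<bar>f y\<bar> \<le> B"
    using f unfolding bounded_real by (meson imageI)
  define K where "K = (unit_coord x + 1) / 2"
  have K: "unit_coord x < K" "0 \<le> K" "K < 1"
    using unit_coord_range[OF x] by (auto simp: K_def)
  have "summable (\<lambda>k. (qbinom q (n + k) k * f (node k)) * K ^ k)"
  proof (rule summable_comparison_test)
    have "\<bar>qbinom q (n + k) k * f (node k) * K ^ k\<bar> \<le> B * (qbinom q (n + k) k * K ^ k)" for k
    proof -
      have "0 \<le> qbinom q (n + k) k * K ^ k" using qbinom_nonneg[OF q_pos] K by simp
      then have "\<bar>f (node k)\<bar> * (qbinom q (n + k) k * K ^ k) \<le> B * (qbinom q (n + k) k * K ^ k)"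
        by (rule mult_right_mono[OF B[OF node_mem]])
      then show ?thesis using qbinom_nonneg[OF q_pos] K by (simp add: abs_mult ac_simps)
    qed
    then show "\<exists>N. \<forall>k\<ge>N.
        norm (qbinom q (n + k) k * f (node k) * K ^ k) \<le> B * (qbinom q (n + k) k * K ^ k)"
      by auto
    show "summable (\<lambda>k. B * (qbinom q (n + k) k * K ^ k))"
      using qbinom_series_sums[OF q_pos q_le_1 K(2,3)] by (intro summable_mult) (auto simp: sums_iff)
  qed
  then have S_cont: "isCont S (unit_coord x)"
    unfolding S_def by (rule isCont_powser) (use K unit_coord_range[OF x] in simp)
  have u_cont: "isCont unit_coord x"
    unfolding unit_coord_def[abs_def] by (intro continuous_intros) (use interval in simp)
  have "isCont (\<lambda>y. \<Prod>j\<le>n. 1 - q ^ j * unit_coord y) x"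
    by (intro continuous_intros u_cont)
  then have P_cont: "isCont (qMKZ_P x1 xN q n) x"
    by (simp add: qMKZ_P_eq_prod[abs_def])
  have "isCont (\<lambda>y. qMKZ_P x1 xN q n y * S (unit_coord y)) x"
    by (intro continuous_intros P_cont isCont_o2[OF u_cont S_cont])
  moreover have "eventually (\<lambda>y. y \<noteq> xN) (nhds x)"
    using x by (intro t1_space_nhds) simp
  then have "eventually (\<lambda>y. qMKZ x1 xN q n f y = qMKZ_P x1 xN q n y * S (unit_coord y)) (nhds x)"
    by (rule eventually_mono) (simp add: qMKZ_eq S_def mult_ac)
  ultimately show ?thesis by (simp add: isCont_cong)
qed

text \<open>Near \<open>xN\<close> the weights of any fixed finite set of nodes vanish with the factor
  \<open>qMKZ_P\<close>, while the remaining nodes are close to \<open>xN\<close>.\<close>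
lemma qMKZ_tendsto_right_end:
  assumes f: "continuous_on {x1..xN} f"
  shows "(qMKZ x1 xN q n f \<longlongrightarrow> f xN) (at xN within {x1..xN})"
proof (rule tendstoI)
  fix e :: real
  assume "0 < e"
  have f_bounded: "bounded (f ` {x1..xN})"
    by (rule compact_imp_bounded[OF compact_continuous_image[OF f compact_Icc]])
  then obtain B where B: "\<And>y. y \<in> {x1..xN} \<Longrightarrow> \<bar>f y\<bar> \<le> B"
    unfolding bounded_real by (meson imageI)
  have "((\<lambda>k. f (node k)) \<longlongrightarrow> f xN) sequentially"
    using continuous_on_tendsto_compose[OF f node_tendsto] node_mem interval by (auto simp: o_def)
  then have "eventually (\<lambda>k. dist (f (node k)) (f xN) < e / 2) sequentially"
    using \<open>0 < e\<close> by (intro tendstoD) auto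
  then obtain K where K: "\<And>k. K \<le> k \<Longrightarrow> \<bar>f (node k) - f xN\<bar> \<le> e / 2"
    unfolding eventually_sequentially dist_real_def by (meson less_imp_le)
  define Q where "Q y = 2 * B * (\<Sum>k<K. weight y k)" for y
  have "continuous (at xN within {x1..xN}) Q"
    unfolding Q_def weight_def unit_coord_def qMKZ_P_def using interval by (intro continuous_intros) auto
  then have "(Q \<longlongrightarrow> 0) (at xN within {x1..xN})"
    by (simp add: continuous_within Q_def weight_def qMKZ_P_right_end)
  then have "eventually (\<lambda>y. Q y < e / 2) (at xN within {x1..xN})"
    using \<open>0 < e\<close> by (intro order_tendstoD(2)) auto
  moreover have "eventually (\<lambda>y. y \<in> {x1..<xN}) (at xN within {x1..xN})"
    by (auto simp: eventually_at_filter)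
  ultimately show "eventually (\<lambda>y. dist (qMKZ x1 xN q n f y) (f xN) < e) (at xN within {x1..xN})"
  proof eventually_elim
    case (elim y)
    have "(\<lambda>k. weight y k * (f (node k) - f xN)) sums (qMKZ x1 xN q n f y - f xN)"
      using sums_diff[OF qMKZ_sums[OF f_bounded elim(2)] sums_mult2[OF weight_sums[OF elim(2)]]]
      by (simp add: right_diff_distrib)
    moreover have "\<bar>f (node k) - f xN\<bar> \<le> 2 * B" for k
      using abs_triangle_ineq4[of "f (node k)" "f xN"] B[OF node_mem, of k] B[of xN] interval by simp
    ultimately have "\<bar>qMKZ x1 xN q n f y - f xN\<bar> \<le> 2 * B * (\<Sum>k<K. weight y k) + e / 2"
      using K by (intro weighted_sums_abs_le[OF weight_sums[OF elim(2)] weight_nonneg[OF elim(2)]])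
    then show ?case using elim(1) by (simp add: Q_def dist_real_def)
  qed
qed

lemma qMKZ_continuous_on:
  assumes f: "continuous_on {x1..xN} f"
  shows "continuous_on {x1..xN} (qMKZ x1 xN q n f)"
  unfolding continuous_on_eq_continuous_within
proof
  fix x
  assume x: "x \<in> {x1..xN}"
  show "continuous (at x within {x1..xN}) (qMKZ x1 xN q n f)"
  proof (cases "x = xN")
    case True
    then show ?thesis using qMKZ_tendsto_right_end[OF f] by (simp add: continuous_within)
  next
    case False
    with x have "x \<in> {x1..<xN}" by simp
    with compact_imp_bounded[OF compact_continuous_image[OF f compact_Icc]]
    have "isCont (qMKZ x1 xN q n f) x" by (rule qMKZ_isCont)
    then show ?thesis by (rule continuous_at_imp_continuous_within)
  qed
qed

end

section \<open>Fractal functions\<close>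

lemma abs_le_SUP_abs:
  fixes h :: "'a::topological_space \<Rightarrow> real"
  assumes "continuous_on S h" "compact S" "x \<in> S"
  shows "\<bar>h x\<bar> \<le> (SUP z\<in>S. \<bar>h z\<bar>)"
proof -
  have "bdd_above ((\<lambda>z. \<bar>h z\<bar>) ` S)"
    using assms(1,2)
    by (intro bounded_imp_bdd_above compact_imp_bounded compact_continuous_image continuous_intros)
  then show ?thesis using assms(3) by (rule cSUP_upper2) simp
qed

lemma ext_cont_in_bcontfun:
  fixes h :: "'a::euclidean_space \<Rightarrow> 'b::metric_space"
  assumes "continuous_on (cbox c d) h"
  shows "ext_cont h c d \<in> bcontfun"
proof -
  obtain g :: "'a \<Rightarrow>\<^sub>C 'b"
    where "\<And>x. x \<in> cbox c d \<Longrightarrow> g x = h x" and "\<And>x. g x = h (clamp c d x)"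
    using continuous_on_cbox_bcontfunE[OF assms] by metis
  then have "ext_cont h c d = apply_bcontfun g" by (auto simp: ext_cont_def)
  then show ?thesis using apply_bcontfun by simp
qed

locale qMKZ_IFS =
  fixes xs :: "nat \<Rightarrow> real" and N :: nat and a b :: "nat \<Rightarrow> real"
    and \<alpha> :: "nat \<Rightarrow> real \<Rightarrow> real" and q :: real and n :: nat
  assumes N: "2 \<le> N"
    and partition: "\<And>i. 1 \<le> i \<Longrightarrow> i < N \<Longrightarrow> xs i < xs (Suc i)"
    and map_left: "\<And>i. i \<in> {1..N-1} \<Longrightarrow> a i * xs 1 + b i = xs i"
    and map_right: "\<And>i. i \<in> {1..N-1} \<Longrightarrow> a i * xs N + b i = xs (Suc i)"
    and scaling_cont: "\<And>i. i \<in> {1..N-1} \<Longrightarrow> continuous_on {xs 1..xs N} (\<alpha> i)"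
    and scaling_norm: "Max ((\<lambda>i. SUP y\<in>{xs 1..xs N}. \<bar>\<alpha> i y\<bar>) ` {1..N-1}) < 1"
    and q_pos: "0 < q" and q_le_1: "q \<le> 1"
begin

abbreviation "I \<equiv> {xs 1..xs N}"
abbreviation "M \<equiv> qMKZ (xs 1) (xs N) q n"
abbreviation "is_fractal \<equiv> is_qMKZ_fractal xs N (\<lambda>i y. a i * y + b i) \<alpha> q n"
abbreviation "fractal \<equiv> qMKZ_fractal xs N (\<lambda>i y. a i * y + b i) \<alpha> q n"

lemma xs_mono:
  assumes "1 \<le> i" "i \<le> j" "j \<le> N"
  shows "xs i \<le> xs j"
  using assms(2,3)
proof (induction j rule: dec_induct)
  case (step j)
  then show ?case using partition[of j] assms(1) by force
qed simp

lemma xs_1_less_xs_N: "xs 1 < xs N"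
  using partition[of 1] xs_mono[of "Suc 1" N] N by simp

sublocale qMKZ_interval "xs 1" "xs N" q n
  using xs_1_less_xs_N q_pos q_le_1 by unfold_locales

lemma slope_pos:
  assumes i: "i \<in> {1..N-1}"
  shows "0 < a i"
proof -
  have "a i * (xs N - xs 1) = xs (Suc i) - xs i"
    using map_left[OF i] map_right[OF i] by (simp add: algebra_simps)
  moreover have "xs i < xs (Suc i)" using partition[of i] i by auto
  ultimately have "0 < a i * (xs N - xs 1)" by simp
  then show ?thesis using xs_1_less_xs_N by (simp add: zero_less_mult_iff)
qed

definition u_inv :: "nat \<Rightarrow> real \<Rightarrow> real" where
  "u_inv i z = (z - b i) / a i"

lemma piece_subset: "i \<in> {1..N-1} \<Longrightarrow> {xs i..xs (Suc i)} \<subseteq> I"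
  using xs_mono[of 1 i] xs_mono[of "Suc i" N] by auto

lemma map_mem_piece:
  assumes i: "i \<in> {1..N-1}" and y: "y \<in> I"
  shows "a i * y + b i \<in> {xs i..xs (Suc i)}"
proof -
  have "a i * xs 1 \<le> a i * y" "a i * y \<le> a i * xs N" using slope_pos[OF i] y by auto
  then show ?thesis using map_left[OF i] map_right[OF i] by auto
qed

lemma u_inv_mem:
  assumes i: "i \<in> {1..N-1}" and z: "z \<in> {xs i..xs (Suc i)}"
  shows "u_inv i z \<in> I"
  using slope_pos[OF i] map_left[OF i] map_right[OF i] z
  by (auto simp: u_inv_def le_divide_eq divide_le_eq mult.commute)

lemma u_inv_map: "i \<in> {1..N-1} \<Longrightarrow> u_inv i (a i * y + b i) = y"
  using slope_pos[of i] by (simp add: u_inv_def)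

lemma map_u_inv: "i \<in> {1..N-1} \<Longrightarrow> a i * u_inv i z + b i = z"
  using slope_pos[of i] by (simp add: u_inv_def)

lemma u_inv_left: "i \<in> {1..N-1} \<Longrightarrow> u_inv i (xs i) = xs 1"
  using u_inv_map map_left by metis

lemma u_inv_right: "i \<in> {1..N-1} \<Longrightarrow> u_inv i (xs (Suc i)) = xs N"
  using u_inv_map map_right by metis

definition piece :: "real \<Rightarrow> nat" where
  "piece z = (LEAST i. 1 \<le> i \<and> z \<le> xs (Suc i))"

lemma piece_le: "i \<in> {1..N-1} \<Longrightarrow> z \<le> xs (Suc i) \<Longrightarrow> piece z \<le> i"
  unfolding piece_def by (rule Least_le) auto

lemma
  assumes z: "z \<in> I"
  shows piece_mem: "piece z \<in> {1..N-1}"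
    and mem_piece: "z \<in> {xs (piece z)..xs (Suc (piece z))}"
proof -
  let ?P = "\<lambda>i. 1 \<le> i \<and> z \<le> xs (Suc i)"
  have PN: "?P (N - 1)" using N z by (auto simp: Suc_diff_le)
  have P: "?P (piece z)" unfolding piece_def by (rule LeastI[of ?P, OF PN])
  have "piece z \<le> N - 1" unfolding piece_def by (rule Least_le[of ?P, OF PN])
  with P show "piece z \<in> {1..N-1}" by auto
  have "xs (piece z) \<le> z"
  proof (cases "piece z = 1")
    case False
    then have "\<not> ?P (piece z - 1)"
      using P unfolding piece_def by (intro not_less_Least) auto
    then show ?thesis using P False by (auto simp: not_le intro: less_imp_le)
  qed (use z in simp)
  then show "z \<in> {xs (piece z)..xs (Suc (piece z))}" using P by simp
qed

lemma I_eq_Union_pieces: "I = (\<Union>i\<in>{1..N-1}. {xs i..xs (Suc i)})"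
  using piece_subset mem_piece piece_mem by blast

text \<open>The Read-Bajraktarevic operator, whose fixed points with the right boundary values are
  the fractal functions of \<open>f\<close>.\<close>
definition RB :: "(real \<Rightarrow> real) \<Rightarrow> (real \<Rightarrow> real) \<Rightarrow> real \<Rightarrow> real" where
  "RB f g z = f z + \<alpha> (piece z) (u_inv (piece z) z)
                 * (g (u_inv (piece z) z) - M f (u_inv (piece z) z))"

text \<open>At a knot shared by two pieces both formulas reduce to \<open>f\<close>, because \<open>g\<close> and \<open>M f\<close>
  agree with \<open>f\<close> at the end points of \<open>I\<close>.\<close>
lemma RB_on_piece:
  assumes g: "g (xs 1) = f (xs 1)" "g (xs N) = f (xs N)"
    and i: "i \<in> {1..N-1}" and z: "z \<in> {xs i..xs (Suc i)}"
  shows "RB f g z = f z + \<alpha> i (u_inv i z) * (g (u_inv i z) - M f (u_inv i z))"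
proof (cases "piece z = i")
  case False
  have zI: "z \<in> I" using piece_subset[OF i] z by blast
  have "piece z < i" using piece_le[OF i, of z] z False by auto
  then have "xs (Suc (piece z)) \<le> xs i" using xs_mono[of "Suc (piece z)" i] i by auto
  then have "z = xs (Suc (piece z))" "z = xs i" using mem_piece[OF zI] z by auto
  then have "u_inv (piece z) z = xs N" "u_inv i z = xs 1"
    using u_inv_right[OF piece_mem[OF zI]] u_inv_left[OF i] by simp_all
  then show ?thesis using g qMKZ_left_end[of f] qMKZ_right_end[of f] by (simp add: RB_def)
qed (simp add: RB_def)

lemma RB_continuous_on:
  assumes f: "continuous_on I f" and g: "continuous_on I g"
    and g_ends: "g (xs 1) = f (xs 1)" "g (xs N) = f (xs N)"
  shows "continuous_on I (RB f g)"
  unfolding I_eq_Union_pieces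
proof (rule continuous_on_closed_Union)
  fix i
  assume i: "i \<in> {1..N-1}"
  have "continuous_on {xs i..xs (Suc i)} (u_inv i)"
    unfolding u_inv_def[abs_def] using slope_pos[OF i] by (intro continuous_intros) auto
  moreover have "u_inv i ` {xs i..xs (Suc i)} \<subseteq> I" using u_inv_mem[OF i] by blast
  ultimately have v: "continuous_on {xs i..xs (Suc i)} (u_inv i)" "u_inv i ` {xs i..xs (Suc i)} \<subseteq> I" .
  have "continuous_on {xs i..xs (Suc i)} (\<lambda>z. f z + \<alpha> i (u_inv i z) * (g (u_inv i z) - M f (u_inv i z)))"
    by (intro continuous_intros continuous_on_subset[OF f piece_subset[OF i]]
        continuous_on_compose2[OF scaling_cont[OF i] v] continuous_on_compose2[OF g v]
        continuous_on_compose2[OF qMKZ_continuous_on[OF f] v])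
  then show "continuous_on {xs i..xs (Suc i)} (RB f g)"
    by (rule continuous_on_eq) (use RB_on_piece[OF g_ends i] in auto)
qed auto

lemma RB_ends:
  assumes "g (xs 1) = f (xs 1)" "g (xs N) = f (xs N)"
  shows "RB f g (xs 1) = f (xs 1)" "RB f g (xs N) = f (xs N)"
proof -
  have i: "1 \<in> {1..N-1}" "N - 1 \<in> {1..N-1}" and SN: "Suc (N - 1) = N" using N by auto
  have "xs 1 \<in> {xs 1..xs (Suc 1)}" "xs N \<in> {xs (N - 1)..xs (Suc (N - 1))}"
    using xs_mono[of 1 "Suc 1"] xs_mono[of "N - 1" N] N SN by auto
  from RB_on_piece[OF assms i(1) this(1)] RB_on_piece[OF assms i(2) this(2)]
  show "RB f g (xs 1) = f (xs 1)" "RB f g (xs N) = f (xs N)"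
    using u_inv_left[OF i(1)] u_inv_right[OF i(2)] assms SN qMKZ_left_end[of f] qMKZ_right_end[of f]
    by simp_all
qed

lemma bounded_image_I: "continuous_on I f \<Longrightarrow> bounded (f ` I)"
  by (rule compact_imp_bounded[OF compact_continuous_image[OF _ compact_Icc]])

definition scaling_bound :: real where
  "scaling_bound = Max ((\<lambda>i. SUP y\<in>I. \<bar>\<alpha> i y\<bar>) ` {1..N-1})"

lemma abs_scaling_le:
  assumes i: "i \<in> {1..N-1}" and y: "y \<in> I"
  shows "\<bar>\<alpha> i y\<bar> \<le> scaling_bound"
proof -
  have "\<bar>\<alpha> i y\<bar> \<le> (SUP y\<in>I. \<bar>\<alpha> i y\<bar>)"
    by (rule abs_le_SUP_abs[OF scaling_cont[OF i] compact_Icc y])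
  also have "\<dots> \<le> scaling_bound"
    unfolding scaling_bound_def using i by (intro Max_ge) auto
  finally show ?thesis .
qed

lemma scaling_bound: "0 \<le> scaling_bound" "scaling_bound < 1"
proof -
  have "1 \<in> {1..N-1}" using N by auto
  from abs_scaling_le[OF this, of "xs 1"] show "0 \<le> scaling_bound"
    using xs_1_less_xs_N by simp
  show "scaling_bound < 1" using scaling_norm by (simp add: scaling_bound_def)
qed

lemma is_fractal_restrict_RB_fixpoint:
  assumes g: "continuous_on I g" and g_ends: "g (xs 1) = f (xs 1)" "g (xs N) = f (xs N)"
    and fixpoint: "\<And>z. z \<in> I \<Longrightarrow> RB f g z = g z"
  shows "is_fractal f (\<lambda>x. if x \<in> I then g x else 0)"
  unfolding is_qMKZ_fractal_def
proof (intro conjI allI impI ballI)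
  show "continuous_on I (\<lambda>x. if x \<in> I then g x else 0)"
    using g by (rule continuous_on_eq) simp
  fix i y
  assume i: "i \<in> {1..N-1}" and y: "y \<in> I"
  define z where "z = a i * y + b i"
  have z: "z \<in> {xs i..xs (Suc i)}" "z \<in> I"
    using map_mem_piece[OF i y] piece_subset[OF i] by (auto simp: z_def)
  have "g z = f z + \<alpha> i y * (g y - M f y)"
    using fixpoint[OF z(2)] RB_on_piece[OF g_ends i z(1)] u_inv_map[OF i] by (simp add: z_def)
  then show "(if a i * y + b i \<in> I then g (a i * y + b i) else 0)
      = f (a i * y + b i) + \<alpha> i y * ((if y \<in> I then g y else 0) - M f y)"
    using y z(2) by (simp add: z_def)
qed auto

lemma fractal_exists:
  assumes f: "continuous_on I f"
  shows "\<exists>g. is_fractal f g"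
proof -
  define S where "S = PiC {xs 1, xs N} (\<lambda>z. {f z})"
  have S_iff: "G \<in> S \<longleftrightarrow> G (xs 1) = f (xs 1) \<and> G (xs N) = f (xs N)" for G
    by (auto simp: S_def mem_PiC_iff)
  define T where "T G = Bcontfun (ext_cont (RB f G) (xs 1) (xs N))" for G :: "real \<Rightarrow>\<^sub>C real"
  have "continuous_on I (RB f G)" if "G \<in> S" for G
    using that unfolding S_iff by (intro RB_continuous_on[OF f]) auto
  then have T_apply: "apply_bcontfun (T G) = ext_cont (RB f G) (xs 1) (xs N)" if "G \<in> S" for G
    unfolding T_def using that by (intro Bcontfun_inverse ext_cont_in_bcontfun) simp
  have "complete S"
    unfolding S_def complete_eq_closed by (intro closed_PiC) auto
  moreover have "Bcontfun (ext_cont f (xs 1) (xs N)) \<in> S"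
    using Bcontfun_inverse[OF ext_cont_in_bcontfun[of "xs 1" "xs N" f]] f xs_1_less_xs_N
    by (simp add: S_iff)
  moreover have "T ` S \<subseteq> S"
    using T_apply RB_ends xs_1_less_xs_N by (auto simp: S_iff)
  moreover have "dist (T G) (T H) \<le> scaling_bound * dist G H" if GH: "G \<in> S" "H \<in> S" for G H
  proof (rule dist_bound)
    fix x
    define z where "z = clamp (xs 1) (xs N) x"
    have z: "z \<in> I"
      using clamp_in_interval[of "xs 1" "xs N" x] xs_1_less_xs_N by (simp add: z_def)
    have T_z: "T K x = RB f K z" if "K \<in> S" for K
      using T_apply[OF that] by (simp add: ext_cont_def z_def)
    have "dist (T G x) (T H x) = \<bar>\<alpha> (piece z) (u_inv (piece z) z)\<bar>
        * dist (G (u_inv (piece z) z)) (H (u_inv (piece z) z))"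
      unfolding T_z[OF GH(1)] T_z[OF GH(2)] RB_def dist_real_def
      by (simp add: abs_mult[symmetric] algebra_simps)
    also have "\<dots> \<le> scaling_bound * dist G H"
      using scaling_bound piece_mem[OF z] u_inv_mem[OF piece_mem[OF z] mem_piece[OF z]]
      by (intro mult_mono abs_scaling_le dist_bounded) auto
    finally show "dist (T G x) (T H x) \<le> scaling_bound * dist G H" .
  qed
  ultimately obtain G where G: "G \<in> S" "T G = G"
    using Banach_fix[OF _ _ scaling_bound] by blast
  have "RB f G z = G z" if "z \<in> I" for z
    using T_apply[OF G(1)] that by (metis G(2) box_real(2) ext_cont_cancel_cbox)
  then have "is_fractal f (\<lambda>x. if x \<in> I then G x else 0)"
    using G(1) by (intro is_fractal_restrict_RB_fixpoint) (auto simp: S_iff)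
  then show ?thesis by blast
qed

lemma is_fractal_eq:
  "is_fractal f g \<Longrightarrow> i \<in> {1..N-1} \<Longrightarrow> y \<in> I \<Longrightarrow>
    g (a i * y + b i) = f (a i * y + b i) + \<alpha> i y * (g y - M f y)"
  unfolding is_qMKZ_fractal_def by blast

lemma is_fractal_lincomb:
  assumes f: "continuous_on I f" and f': "continuous_on I f'"
    and g: "is_fractal f g" and g': "is_fractal f' g'"
  shows "is_fractal (\<lambda>y. c * f y + d * f' y) (\<lambda>y. c * g y + d * g' y)"
  unfolding is_qMKZ_fractal_def
proof (intro conjI allI impI ballI)
  show "continuous_on I (\<lambda>y. c * g y + d * g' y)"
    using g g' unfolding is_qMKZ_fractal_def by (intro continuous_intros) auto
  show "c * g y + d * g' y = 0" if "y \<notin> I" for y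
    using g g' that unfolding is_qMKZ_fractal_def by simp
  fix i y
  assume i: "i \<in> {1..N-1}" and y: "y \<in> I"
  show "c * g (a i * y + b i) + d * g' (a i * y + b i)
      = c * f (a i * y + b i) + d * f' (a i * y + b i)
        + \<alpha> i y * (c * g y + d * g' y - M (\<lambda>y. c * f y + d * f' y) y)"
    unfolding is_fractal_eq[OF g i y] is_fractal_eq[OF g' i y]
      qMKZ_lincomb[OF bounded_image_I[OF f] bounded_image_I[OF f'] y]
    by (simp add: algebra_simps)
qed

text \<open>With sup-norms, the functional equation gives \<open>\<parallel>g\<parallel> \<le> \<parallel>f\<parallel> + s (\<parallel>g\<parallel> + \<parallel>M f\<parallel>)\<close>
  for the scaling bound \<open>s < 1\<close>, and \<open>\<parallel>M f\<parallel> \<le> \<parallel>f\<parallel>\<close>.\<close>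
lemma is_fractal_abs_le:
  assumes f: "continuous_on I f" and g: "is_fractal f g" and x: "x \<in> I"
  shows "\<bar>g x\<bar> \<le> (1 + scaling_bound) / (1 - scaling_bound) * (SUP z\<in>I. \<bar>f z\<bar>)"
proof -
  define Sf where "Sf = (SUP z\<in>I. \<bar>f z\<bar>)"
  define Sg where "Sg = (SUP z\<in>I. \<bar>g z\<bar>)"
  have g_cont: "continuous_on I g" using g by (simp add: is_qMKZ_fractal_def)
  have f_le: "\<bar>f z\<bar> \<le> Sf" if "z \<in> I" for z
    unfolding Sf_def using f compact_Icc that by (rule abs_le_SUP_abs)
  have g_le: "\<bar>g z\<bar> \<le> Sg" if "z \<in> I" for z
    unfolding Sg_def using g_cont compact_Icc that by (rule abs_le_SUP_abs)
  have "\<bar>g z\<bar> \<le> Sf + scaling_bound * (Sg + Sf)" if z: "z \<in> I" for z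
  proof -
    define i where "i = piece z"
    define y where "y = u_inv i z"
    have i: "i \<in> {1..N-1}" and y: "y \<in> I" and z_eq: "a i * y + b i = z"
      using piece_mem[OF z] u_inv_mem[OF _ mem_piece[OF z]] map_u_inv by (auto simp: i_def y_def)
    have "\<bar>g z\<bar> \<le> \<bar>f z\<bar> + \<bar>\<alpha> i y\<bar> * \<bar>g y - M f y\<bar>"
      unfolding z_eq[symmetric] is_fractal_eq[OF g i y] abs_mult[symmetric] by (rule abs_triangle_ineq)
    also have "\<dots> \<le> \<bar>f z\<bar> + \<bar>\<alpha> i y\<bar> * (\<bar>g y\<bar> + \<bar>M f y\<bar>)"
      by (intro add_left_mono mult_left_mono abs_triangle_ineq4) simp
    also have "\<dots> \<le> Sf + scaling_bound * (Sg + Sf)"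
      using scaling_bound f_le[OF z] abs_scaling_le[OF i y] g_le[OF y] qMKZ_abs_le[OF f_le y]
      by (intro add_mono mult_mono) auto
    finally show ?thesis .
  qed
  then have "Sg \<le> Sf + scaling_bound * (Sg + Sf)"
    unfolding Sg_def using xs_1_less_xs_N by (intro cSUP_least) auto
  then have "Sg \<le> (1 + scaling_bound) / (1 - scaling_bound) * Sf"
    using scaling_bound by (simp add: field_simps)
  then show ?thesis using g_le[OF x] by (simp add: Sf_def)
qed

lemma is_fractal_unique:
  assumes f: "continuous_on I f" and g: "is_fractal f g" and g': "is_fractal f g'"
  shows "g = g'"
proof
  fix x
  have "is_fractal (\<lambda>y. 1 * f y + (- 1) * f y) (\<lambda>y. 1 * g y + (- 1) * g' y)"
    by (rule is_fractal_lincomb[OF f f g g'])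
  then have zero: "is_fractal (\<lambda>_. 0) (\<lambda>y. g y - g' y)" by simp
  show "g x = g' x"
  proof (cases "x \<in> I")
    case True
    from is_fractal_abs_le[OF continuous_on_const zero True] show ?thesis
      using xs_1_less_xs_N by simp
  next
    case False
    with g g' show ?thesis by (simp add: is_qMKZ_fractal_def)
  qed
qed

lemma is_fractal_fractal:
  assumes f: "continuous_on I f"
  shows "is_fractal f (fractal f)"
proof -
  obtain g where g: "is_fractal f g" using fractal_exists[OF f] by blast
  show ?thesis
    unfolding qMKZ_fractal_def by (rule theI[of "is_fractal f", OF g]) (rule is_fractal_unique[OF f _ g])
qed

lemma fractal_eqI:
  assumes f: "continuous_on I f" and g: "is_fractal f g"
  shows "fractal f = g"
  by (rule is_fractal_unique[OF f is_fractal_fractal[OF f] g])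

lemma fractal_lincomb:
  assumes "continuous_on I f" "continuous_on I f'"
  shows "fractal (\<lambda>y. c * f y + d * f' y) = (\<lambda>y. c * fractal f y + d * fractal f' y)"
  using assms by (intro fractal_eqI is_fractal_lincomb is_fractal_fractal continuous_intros)

end

theorem theorem3p2:
  fixes xs :: "nat \<Rightarrow> real" and N :: nat and a b :: "nat \<Rightarrow> real"
    and \<alpha> :: "nat \<Rightarrow> real \<Rightarrow> real" and q :: real and n :: nat
  defines "I \<equiv> {xs 1..xs N}"
  defines "u \<equiv> (\<lambda>i y. a i * y + b i)"
  defines "F \<equiv> qMKZ_fractal xs N u \<alpha> q n"
  assumes N: "N \<ge> 2"
    and part: "\<And>i. 1 \<le> i \<Longrightarrow> i < N \<Longrightarrow> xs i < xs (Suc i)"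
    and u_left: "\<And>i. i \<in> {1..N-1} \<Longrightarrow> u i (xs 1) = xs i"
    and u_right: "\<And>i. i \<in> {1..N-1} \<Longrightarrow> u i (xs N) = xs (Suc i)"
    and \<alpha>_cont: "\<And>i. i \<in> {1..N-1} \<Longrightarrow> continuous_on I (\<alpha> i)"
    and \<alpha>_norm: "Max ((\<lambda>i. SUP y\<in>I. \<bar>\<alpha> i y\<bar>) ` {1..N-1}) < 1"
    and q: "0 < q" "q \<le> 1"
    and n: "n \<ge> 1"
  shows "(\<forall>f. continuous_on I f \<longrightarrow> continuous_on I (F f))
       \<and> (\<forall>f g c. continuous_on I f \<longrightarrow> continuous_on I g \<longrightarrow>
            F (\<lambda>y. f y + g y) = (\<lambda>y. F f y + F g y) \<and> F (\<lambda>y. c * f y) = (\<lambda>y. c * F f y))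
       \<and> (\<exists>C\<ge>0. \<forall>f. continuous_on I f \<longrightarrow>
            (\<forall>y\<in>I. \<bar>F f y\<bar> \<le> C * (SUP z\<in>I. \<bar>f z\<bar>)))"
proof -
  interpret qMKZ_IFS xs N a b \<alpha> q n
    using N part u_left u_right \<alpha>_cont \<alpha>_norm q by unfold_locales (auto simp: u_def I_def)
  have F: "F = fractal" by (simp add: F_def u_def)
  show ?thesis
    unfolding F I_def
  proof (intro conjI allI impI exI[of _ "(1 + scaling_bound) / (1 - scaling_bound)"] ballI)
    show "continuous_on {xs 1..xs N} (fractal f)" if "continuous_on {xs 1..xs N} f" for f
      using is_fractal_fractal[OF that] by (simp add: is_qMKZ_fractal_def)
    show "fractal (\<lambda>y. f y + g y) = (\<lambda>y. fractal f y + fractal g y)"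
      if "continuous_on {xs 1..xs N} f" "continuous_on {xs 1..xs N} g" for f g
      using fractal_lincomb[OF that, of 1 1] by simp
    show "fractal (\<lambda>y. c * f y) = (\<lambda>y. c * fractal f y)" if "continuous_on {xs 1..xs N} f" for f c
      using fractal_lincomb[OF that that, of c 0] by simp
    show "0 \<le> (1 + scaling_bound) / (1 - scaling_bound)" using scaling_bound by simp
    show "\<bar>fractal f y\<bar> \<le> (1 + scaling_bound) / (1 - scaling_bound) * (SUP z\<in>{xs 1..xs N}. \<bar>f z\<bar>)"
      if "continuous_on {xs 1..xs N} f" "y \<in> {xs 1..xs N}" for f y
      using is_fractal_abs_le[OF that(1) is_fractal_fractal[OF that(1)] that(2)] .
  qed
qed

end
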